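(* Let $P'=(P_1,\dots,P_m,0,\dots,0)$ and $Q'=(0,\dots,0)$ (both of length $m+n$) and $K:=L^{\mathrm{skew}}_{A_{m+n-1}}(P'/Q')$, the latter encoded by arrays $(g'_{k,l})_{0\le k\le m+n,\ l\in C'_k}$ with $C'_k:=\{k-(m+n-1),\dots,k\}$ (the construction below with $m+n$ in place of both $m$ and $n$), and with its own edge coefficients $X',Y'$ given by the same formulas. For $x\in L:=L^{\mathrm{skew}}_{A_{n-1}}(P/Q)$ with array $(g_{i,j}(x))$, define the array $\phi(x)$ by: $g'_{k,l}(\phi(x)):=0$ if $l\le 0$; $:=g_{0,l-m}(x)$ if $1\le k\le m-1$, $1\le l\le k$; $:=0$ if $m+1\le k\le m+n$, $1\le l\le k-m$; $:=g_{k-m,l-m}(x)$ if $m\le k\le m+n$, $k-m+1\le l\le k$. Then: $\phi(x)$ is the array of an element of $K$, and $\phi:L\to K$ is injective; $S\xrightarrow{i}T$ in $L$ iff $\phi(S)\xrightarrow{i+m}\phi(T)$ in $K$; $\phi(L)$ equals the $J$-component of $\phi(M)$ in $K$, where $J=\{m+1,\dots,m+n-1\}$ and $M$ is the maximum of $L$; $m_{i+m}(\phi(x))=m_i(x)$ for all $x\in L$ and $1\le i\le n-1$ (weights computed in $K$ and $L$ respectively); and for every edge $S\xrightarrow{i}T$ of $L$, $X'_{\phi(T),\phi(S)}=X_{T,S}$ and $Y'_{\phi(S),\phi(T)}=Y_{S,T}$.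
   Context: Fix integers $m\ge n\ge 2$ and weakly decreasing $m$-tuples of nonnegative integers $P=(P_1,\dots,P_m)$ and $Q=(Q_1,\dots,Q_m)$ with $Q_r\le P_r$ for all $r$. The skew shape $P/Q$ is the set of cells $(r,c)$ (row $r$, column $c$, matrix convention) with $Q_r<c\le P_r$; assume no column of $P/Q$ contains more than $n$ cells. $L^{\mathrm{skew}}_{A_{n-1}}(P/Q)$ is the set of semistandard tableaux $T$ of shape $P/Q$ with entries in $\{1,\dots,n\}$ (entries weakly increase left to right along rows and strictly increase top to bottom down columns), partially ordered by $S\le T$ iff $S_{r,c}\ge T_{r,c}$ for every cell $(r,c)$. The Hasse diagram edges are colored: $S\to T$ is a covering iff $S,T$ differ in exactly one cell $(r,c)$ and $S_{r,c}=T_{r,c}+1$; this edge gets color $i:=T_{r,c}\in\{1,\dots,n-1\}$, written $S\xrightarrow{i}T$. GT parallelograms: for $0\le i\le n$ put $C_i:=\{i-(m-1),\dots,i-1,i\}$. To each tableau $T$ associate the integer array $(g_{i,j}(T))_{0\le i\le n,\,j\in C_i}$ defined by $g_{i,i+1-r}(T):=Q_r+|\{c:(r,c)\in P/Q,\ T_{r,c}\le i\}|$ for $1\le r\le m$. (Thus $g_{0,j}=Q_{1-j}$, $g_{n,j}=P_{n+1-j}$, and these are exactly the integer arrays with these boundary columns satisfying $\max(g_{i-1,j-1},g_{i+1,j})\le g_{i,j}\le\min(g_{i-1,j},g_{i+1,j+1})$, undefined terms ignored.) One has $S\xrightarrow{i}T$ iff the arrays of $S$ and $T$ agree except at exactly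 one position $(i,j)$, where $g_{i,j}(T)=g_{i,j}(S)+1$. Edge coefficients: for an edge $S\xrightarrow{i}T$ with differing position $(i,j)$, writing $g_{p,q}:=g_{p,q}(T)$, $$X_{T,S}:=-\frac{\prod_{k\in C_{i+1}}(g_{i,j}-g_{i+1,k}+j-k)}{\prod_{k\in C_i\setminus\{j\}}(g_{i,j}-g_{i,k}+j-k-1)},\qquad Y_{S,T}:=\frac{\prod_{k\in C_{i-1}}(g_{i,j}-g_{i-1,k}+j-k-1)}{\prod_{k\in C_i\setminus\{j\}}(g_{i,j}-g_{i,k}+j-k)}.$$ Components and weights on colored posets: for a set $J$ of colors, the $J$-component of $t$ is the set of elements reachable from $t$ by undirected paths using only edges with colors in $J$. For a single color $i$, with $l_i(t)$ the length of the $i$-component of $t$ and $\rho_i(t)$ the rank of $t$ in it, $m_i(t):=2\rho_i(t)-l_i(t)$. *)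

theory Defs
  imports Complex_Main
begin

text \<open>Tuples P, Q are functions nat => nat, only the values at 1..mm matter.
  Cells are pairs (row, column) with rows and columns indexed from 1.
  A tableau is a function on cells, normalised to 0 outside the shape.\<close>

definition skew_cells :: "nat \<Rightarrow> (nat \<Rightarrow> nat) \<Rightarrow> (nat \<Rightarrow> nat) \<Rightarrow> (nat \<times> nat) set" where
  "skew_cells mm P Q = {(r, c). 1 \<le> r \<and> r \<le> mm \<and> Q r < c \<and> c \<le> P r}"

definition skew_tabs :: "nat \<Rightarrow> nat \<Rightarrow> (nat \<Rightarrow> nat) \<Rightarrow> (nat \<Rightarrow> nat) \<Rightarrow> (nat \<times> nat \<Rightarrow> nat) set" where
  "skew_tabs mm n P Q = {T.
     (\<forall>x. x \<notin> skew_cells mm P Q \<longrightarrow> T x = 0) \<and>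
     (\<forall>(r, c) \<in> skew_cells mm P Q. 1 \<le> T (r, c) \<and> T (r, c) \<le> n) \<and>
     (\<forall>r c c'. (r, c) \<in> skew_cells mm P Q \<longrightarrow> (r, c') \<in> skew_cells mm P Q \<longrightarrow> c < c'
                \<longrightarrow> T (r, c) \<le> T (r, c')) \<and>
     (\<forall>r r' c. (r, c) \<in> skew_cells mm P Q \<longrightarrow> (r', c) \<in> skew_cells mm P Q \<longrightarrow> r < r'
                \<longrightarrow> T (r, c) < T (r', c))}"

text \<open>Partial order: S <= T iff S has entries >= those of T in every cell.\<close>
definition tab_le :: "nat \<Rightarrow> (nat \<Rightarrow> nat) \<Rightarrow> (nat \<Rightarrow> nat) \<Rightarrow> (nat \<times> nat \<Rightarrow> nat) \<Rightarrow> (nat \<times> nat \<Rightarrow> nat) \<Rightarrow> bool" where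
  "tab_le mm P Q S T \<longleftrightarrow> (\<forall>x \<in> skew_cells mm P Q. T x \<le> S x)"

definition tab_max :: "nat \<Rightarrow> nat \<Rightarrow> (nat \<Rightarrow> nat) \<Rightarrow> (nat \<Rightarrow> nat) \<Rightarrow> (nat \<times> nat \<Rightarrow> nat)" where
  "tab_max mm n P Q = (THE M. M \<in> skew_tabs mm n P Q \<and> (\<forall>x \<in> skew_tabs mm n P Q. tab_le mm P Q x M))"

text \<open>Coloured Hasse-diagram edge S --i--> T (covering relation with its colour).\<close>
definition tab_edge :: "nat \<Rightarrow> nat \<Rightarrow> (nat \<Rightarrow> nat) \<Rightarrow> (nat \<Rightarrow> nat) \<Rightarrow> (nat \<times> nat \<Rightarrow> nat) \<Rightarrow> nat \<Rightarrow> (nat \<times> nat \<Rightarrow> nat) \<Rightarrow> bool" where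
  "tab_edge mm n P Q S i T \<longleftrightarrow> S \<in> skew_tabs mm n P Q \<and> T \<in> skew_tabs mm n P Q \<and>
     (\<exists>x \<in> skew_cells mm P Q. S x = T x + 1 \<and> T x = i \<and>
        (\<forall>y \<in> skew_cells mm P Q. y \<noteq> x \<longrightarrow> S y = T y))"

definition Cset :: "nat \<Rightarrow> int \<Rightarrow> int set" where
  "Cset mm i = {i - (int mm - 1) .. i}"

definition garr :: "nat \<Rightarrow> (nat \<Rightarrow> nat) \<Rightarrow> (nat \<Rightarrow> nat) \<Rightarrow> (nat \<times> nat \<Rightarrow> nat) \<Rightarrow> int \<Rightarrow> int \<Rightarrow> int" where
  "garr mm P Q T i j = (let r = i + 1 - j in
     if 1 \<le> r \<and> r \<le> int mm
     then int (Q (nat r)) + int (card {c. (nat r, c) \<in> skew_cells mm P Q \<and> int (T (nat r, c)) \<le> i})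
     else 0)"

definition diff_pos :: "nat \<Rightarrow> (nat \<Rightarrow> nat) \<Rightarrow> (nat \<Rightarrow> nat) \<Rightarrow> (nat \<times> nat \<Rightarrow> nat) \<Rightarrow> (nat \<times> nat \<Rightarrow> nat) \<Rightarrow> int \<Rightarrow> int" where
  "diff_pos mm P Q S T i = (THE j. j \<in> Cset mm i \<and> garr mm P Q S i j \<noteq> garr mm P Q T i j)"

definition Xcoef :: "nat \<Rightarrow> (nat \<Rightarrow> nat) \<Rightarrow> (nat \<Rightarrow> nat) \<Rightarrow> (nat \<times> nat \<Rightarrow> nat) \<Rightarrow> (nat \<times> nat \<Rightarrow> nat) \<Rightarrow> nat \<Rightarrow> real" where
  "Xcoef mm P Q T S i = (let ii = int i; j = diff_pos mm P Q S T ii; g = garr mm P Q T in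
     - (\<Prod>k \<in> Cset mm (ii + 1). real_of_int (g ii j - g (ii + 1) k + j - k))
     / (\<Prod>k \<in> Cset mm ii - {j}. real_of_int (g ii j - g ii k + j - k - 1)))"

definition Ycoef :: "nat \<Rightarrow> (nat \<Rightarrow> nat) \<Rightarrow> (nat \<Rightarrow> nat) \<Rightarrow> (nat \<times> nat \<Rightarrow> nat) \<Rightarrow> (nat \<times> nat \<Rightarrow> nat) \<Rightarrow> nat \<Rightarrow> real" where
  "Ycoef mm P Q S T i = (let ii = int i; j = diff_pos mm P Q S T ii; g = garr mm P Q T in
     (\<Prod>k \<in> Cset mm (ii - 1). real_of_int (g ii j - g (ii - 1) k + j - k - 1))
     / (\<Prod>k \<in> Cset mm ii - {j}. real_of_int (g ii j - g ii k + j - k)))"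

definition col_adj :: "('a \<Rightarrow> nat \<Rightarrow> 'a \<Rightarrow> bool) \<Rightarrow> nat set \<Rightarrow> 'a \<Rightarrow> 'a \<Rightarrow> bool" where
  "col_adj E J a b \<longleftrightarrow> (\<exists>i \<in> J. E a i b \<or> E b i a)"

definition component :: "('a \<Rightarrow> nat \<Rightarrow> 'a \<Rightarrow> bool) \<Rightarrow> nat set \<Rightarrow> 'a \<Rightarrow> 'a set" where
  "component E J t = {s. (col_adj E J)\<^sup>*\<^sup>* t s}"

definition col_path :: "('a \<Rightarrow> nat \<Rightarrow> 'a \<Rightarrow> bool) \<Rightarrow> nat \<Rightarrow> 'a list \<Rightarrow> bool" where
  "col_path E i xs \<longleftrightarrow> xs \<noteq> [] \<and> (\<forall>k. Suc k < length xs \<longrightarrow> E (xs ! k) i (xs ! Suc k))"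

definition comp_length :: "('a \<Rightarrow> nat \<Rightarrow> 'a \<Rightarrow> bool) \<Rightarrow> nat \<Rightarrow> 'a \<Rightarrow> nat" where
  "comp_length E i t = Max {length xs - 1 | xs. col_path E i xs \<and> hd xs \<in> component E {i} t}"

definition comp_rank :: "('a \<Rightarrow> nat \<Rightarrow> 'a \<Rightarrow> bool) \<Rightarrow> nat \<Rightarrow> 'a \<Rightarrow> nat" where
  "comp_rank E i t = Max {length xs - 1 | xs. col_path E i xs \<and> last xs = t}"

definition weight :: "('a \<Rightarrow> nat \<Rightarrow> 'a \<Rightarrow> bool) \<Rightarrow> nat \<Rightarrow> 'a \<Rightarrow> int" where
  "weight E i t = 2 * int (comp_rank E i t) - int (comp_length E i t)"

definition ext_P :: "nat \<Rightarrow> (nat \<Rightarrow> nat) \<Rightarrow> nat \<Rightarrow> nat" where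
  "ext_P m P r = (if r \<le> m then P r else 0)"

definition zero_Q :: "nat \<Rightarrow> nat" where
  "zero_Q r = 0"

definition phi_arr :: "nat \<Rightarrow> (int \<Rightarrow> int \<Rightarrow> int) \<Rightarrow> int \<Rightarrow> int \<Rightarrow> int" where
  "phi_arr m g k l =
     (if l \<le> 0 then 0
      else if 1 \<le> k \<and> k \<le> int m - 1 \<and> 1 \<le> l \<and> l \<le> k then g 0 (l - int m)
      else if int m + 1 \<le> k \<and> 1 \<le> l \<and> l \<le> k - int m then 0
      else if int m \<le> k \<and> k - int m + 1 \<le> l \<and> l \<le> k then g (k - int m) (l - int m)
      else 0)"

definition phi :: "nat \<Rightarrow> nat \<Rightarrow> (nat \<Rightarrow> nat) \<Rightarrow> (nat \<Rightarrow> nat) \<Rightarrow> (nat \<times> nat \<Rightarrow> nat) \<Rightarrow> (nat \<times> nat \<Rightarrow> nat)" where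
  "phi m n P Q x = (THE y. y \<in> skew_tabs (m + n) (m + n) (ext_P m P) zero_Q \<and>
     (\<forall>k \<in> {0 .. int (m + n)}. \<forall>l \<in> Cset (m + n) k.
        garr (m + n) (ext_P m P) zero_Q y k l = phi_arr m (garr m P Q x) k l))"

end

(*
  phi is realised on tableaux: an entry t of x in P/Q becomes t + m, and the cells of Q,
  which belong to the straight shape P', are filled column by column with m - Q'_c + 1, ..., m
  (Q' the conjugate of Q). Counting entries row by row shows that the GT array of this tableau
  is exactly the array phi(x), and the array determines the tableau.

  In the image, cells of Q carry entries <= m and cells of P/Q entries > m. An edge of colour
  i + m changes one entry from i + m + 1 to i + m, so it only touches P/Q: edges correspond, and
  phi(L) is closed under all edges of colours > m. Hence phi(L) is a union of J-components; it is
  a single one because every x other than the maximum M has an edge towards M. Being a union of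
  (i + m)-components on which phi is an isomorphism of i-coloured graphs, phi(L) carries the
  same ranks, lengths and weights.

  At the levels k >= m the rows of the array of phi(T) consist of n zeros followed by the rows
  of the array of T shifted by m. In X' and Y' the zeros contribute one common factor, depending
  only on the level plus the constant offset, to numerator and denominator, and it cancels.
*)
theory Submission
  imports Defs
begin

section \<open>Skew tableaux and their GT arrays\<close>

lemma mem_skew_cells: "(r, c) \<in> skew_cells mm P Q \<longleftrightarrow> 1 \<le> r \<and> r \<le> mm \<and> Q r < c \<and> c \<le> P r"
  by (simp add: skew_cells_def)

lemma skew_tabsD:
  assumes "y \<in> skew_tabs mm N P Q"
  shows "\<And>x. x \<notin> skew_cells mm P Q \<Longrightarrow> y x = 0"
    and "\<And>r c. (r, c) \<in> skew_cells mm P Q \<Longrightarrow> 1 \<le> y (r, c) \<and> y (r, c) \<le> N"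
    and "\<And>r c c'. (r, c) \<in> skew_cells mm P Q \<Longrightarrow> (r, c') \<in> skew_cells mm P Q \<Longrightarrow> c < c'
           \<Longrightarrow> y (r, c) \<le> y (r, c')"
    and "\<And>r r' c. (r, c) \<in> skew_cells mm P Q \<Longrightarrow> (r', c) \<in> skew_cells mm P Q \<Longrightarrow> r < r'
           \<Longrightarrow> y (r, c) < y (r', c)"
  using assms unfolding skew_tabs_def mem_Collect_eq by blast+

lemma skew_tabsI:
  assumes "\<And>x. x \<notin> skew_cells mm P Q \<Longrightarrow> y x = 0"
    and "\<And>r c. (r, c) \<in> skew_cells mm P Q \<Longrightarrow> 1 \<le> y (r, c) \<and> y (r, c) \<le> N"
    and "\<And>r c c'. (r, c) \<in> skew_cells mm P Q \<Longrightarrow> (r, c') \<in> skew_cells mm P Q \<Longrightarrow> c < c'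
           \<Longrightarrow> y (r, c) \<le> y (r, c')"
    and "\<And>r r' c. (r, c) \<in> skew_cells mm P Q \<Longrightarrow> (r', c) \<in> skew_cells mm P Q \<Longrightarrow> r < r'
           \<Longrightarrow> y (r, c) < y (r', c)"
  shows "y \<in> skew_tabs mm N P Q"
  unfolding skew_tabs_def mem_Collect_eq using assms by blast

lemma skew_tabs_eqI:
  assumes "S \<in> skew_tabs mm N P Q" "T \<in> skew_tabs mm N P Q"
    and "\<And>w. w \<in> skew_cells mm P Q \<Longrightarrow> S w = T w"
  shows "S = T"
  using assms skew_tabsD(1)[OF assms(1)] skew_tabsD(1)[OF assms(2)] by (metis ext)

lemma finite_skew_row: "finite {c. (r, c) \<in> skew_cells mm P Q \<and> R c}"
  by (rule finite_subset[of _ "{..P r}"]) (auto simp: mem_skew_cells)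

lemma garr_row:
  assumes "1 \<le> r" "r \<le> mm"
  shows "garr mm P Q y k (k + 1 - int r)
           = int (Q r) + int (card {c. (r, c) \<in> skew_cells mm P Q \<and> int (y (r, c)) \<le> k})"
  using assms by (simp add: garr_def Let_def)

lemma garr_level_zero:
  assumes y: "y \<in> skew_tabs mm N P Q" and s: "1 \<le> s" "s \<le> mm"
  shows "garr mm P Q y 0 (0 + 1 - int s) = int (Q s)"
proof -
  have none: "{c. (s, c) \<in> skew_cells mm P Q \<and> int (y (s, c)) \<le> 0} = {}"
    using skew_tabsD(2)[OF y] by fastforce
  show ?thesis by (simp only: garr_row[OF s] none card.empty of_nat_0 add_0_right)
qed

lemma tab_entry_le_iff_garr:
  assumes y: "y \<in> skew_tabs mm N P Q" and rc: "(r, c) \<in> skew_cells mm P Q"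
  shows "int (y (r, c)) \<le> k \<longleftrightarrow> int c \<le> garr mm P Q y k (k + 1 - int r)"
proof -
  define S where "S = {c'. (r, c') \<in> skew_cells mm P Q \<and> int (y (r, c')) \<le> k}"
  from rc have r: "1 \<le> r" "r \<le> mm" "Q r < c" "c \<le> P r" by (auto simp: mem_skew_cells)
  have g: "garr mm P Q y k (k + 1 - int r) = int (Q r) + int (card S)"
    unfolding S_def using r by (simp add: garr_row)
  have row_le: "y (r, c') \<le> y (r, c)" if "(r, c') \<in> skew_cells mm P Q" "c' \<le> c" for c'
    using that skew_tabsD(3)[OF y that(1) rc] by (cases "c' = c") auto
  have row_ge: "y (r, c) \<le> y (r, c')" if "(r, c') \<in> skew_cells mm P Q" "c \<le> c'" for c'
    using that skew_tabsD(3)[OF y rc that(1)] by (cases "c' = c") auto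
  show ?thesis
  proof
    assume le: "int (y (r, c)) \<le> k"
    have "{Q r + 1..c} \<subseteq> S"
    proof
      fix c' assume "c' \<in> {Q r + 1..c}"
      then have "(r, c') \<in> skew_cells mm P Q" using r by (auto simp: mem_skew_cells)
      then show "c' \<in> S" using row_le le \<open>c' \<in> {Q r + 1..c}\<close> unfolding S_def by force
    qed
    then have "card {Q r + 1..c} \<le> card S"
      by (rule card_mono[rotated]) (simp add: S_def finite_skew_row)
    then show "int c \<le> garr mm P Q y k (k + 1 - int r)" using g r by simp
  next
    assume ge: "int c \<le> garr mm P Q y k (k + 1 - int r)"
    show "int (y (r, c)) \<le> k"
    proof (rule ccontr)
      assume "\<not> int (y (r, c)) \<le> k"
      then have "S \<subseteq> {Q r + 1..c - 1}"
        using row_ge by (force simp: S_def mem_skew_cells)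
      then have "card S \<le> card {Q r + 1..c - 1}" by (rule card_mono[rotated]) simp
      then show False using g ge r by simp
    qed
  qed
qed

lemma skew_tabs_eq_if_garr_eq:
  assumes y: "y \<in> skew_tabs mm N P Q" and y': "y' \<in> skew_tabs mm N P Q"
    and eq: "\<forall>k \<in> {0 .. int N}. \<forall>l \<in> Cset mm k. garr mm P Q y k l = garr mm P Q y' k l"
  shows "y = y'"
proof (rule skew_tabs_eqI[OF y y'])
  fix w assume w: "w \<in> skew_cells mm P Q"
  obtain r c where rc: "w = (r, c)" by (cases w)
  have r: "1 \<le> r" "r \<le> mm" using w rc by (auto simp: mem_skew_cells)
  have le_iff: "int (y w) \<le> k \<longleftrightarrow> int (y' w) \<le> k" if "k \<in> {0 .. int N}" for k
  proof -
    have "k + 1 - int r \<in> Cset mm k" using r by (simp add: Cset_def)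
    then show ?thesis
      using eq that tab_entry_le_iff_garr[OF y] tab_entry_le_iff_garr[OF y'] w rc by simp
  qed
  have "y w \<le> N" "y' w \<le> N" using skew_tabsD(2)[OF y] skew_tabsD(2)[OF y'] w rc by auto
  then show "y w = y' w" using le_iff[of "int (y w)"] le_iff[of "int (y' w)"] by simp
qed

lemma tab_edge_in_tabs:
  "tab_edge mm N P Q S i T \<Longrightarrow> S \<in> skew_tabs mm N P Q \<and> T \<in> skew_tabs mm N P Q"
  unfolding tab_edge_def by blast

lemma tab_edgeE:
  assumes "tab_edge mm N P Q S i T"
  obtains r c where "(r, c) \<in> skew_cells mm P Q" "S (r, c) = T (r, c) + 1" "T (r, c) = i"
    "\<forall>y \<in> skew_cells mm P Q. y \<noteq> (r, c) \<longrightarrow> S y = T y"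
  using assms unfolding tab_edge_def by auto

lemma garr_tab_edge_differs_iff:
  assumes z: "(r, c) \<in> skew_cells mm P Q" "S (r, c) = T (r, c) + 1" "T (r, c) = i"
    and same: "\<forall>y \<in> skew_cells mm P Q. y \<noteq> (r, c) \<longrightarrow> S y = T y"
    and r': "1 \<le> r'" "r' \<le> mm"
  shows "garr mm P Q S (int i) (int i + 1 - int r') \<noteq> garr mm P Q T (int i) (int i + 1 - int r')
           \<longleftrightarrow> r' = r"
proof -
  let ?row = "\<lambda>y r. {c'. (r, c') \<in> skew_cells mm P Q \<and> int (y (r, c')) \<le> int i}"
  have "?row T r = insert c (?row S r)" "c \<notin> ?row S r"
    using same z by auto
  then have "card (?row S r) \<noteq> card (?row T r)"
    by (simp add: finite_skew_row)
  moreover have "?row S r' = ?row T r'" if "r' \<noteq> r"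
    using same that by auto
  ultimately show ?thesis
    using garr_row[OF r', of P Q S "int i"] garr_row[OF r', of P Q T "int i"]
    by (cases "r' = r") simp_all
qed

lemma diff_pos_tab_edge:
  assumes z: "(r, c) \<in> skew_cells mm P Q" "S (r, c) = T (r, c) + 1" "T (r, c) = i"
    and same: "\<forall>y \<in> skew_cells mm P Q. y \<noteq> (r, c) \<longrightarrow> S y = T y"
  shows "diff_pos mm P Q S T (int i) = int i + 1 - int r"
  unfolding diff_pos_def
proof (rule the_equality)
  have r: "1 \<le> r" "r \<le> mm" using z by (auto simp: mem_skew_cells)
  then show "int i + 1 - int r \<in> Cset mm (int i)
      \<and> garr mm P Q S (int i) (int i + 1 - int r) \<noteq> garr mm P Q T (int i) (int i + 1 - int r)"
    using garr_tab_edge_differs_iff[OF z same r] by (simp add: Cset_def)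
next
  fix j assume j: "j \<in> Cset mm (int i) \<and> garr mm P Q S (int i) j \<noteq> garr mm P Q T (int i) j"
  define r' where "r' = nat (int i + 1 - j)"
  have r': "1 \<le> r'" "r' \<le> mm" "j = int i + 1 - int r'"
    using j unfolding r'_def Cset_def by auto
  then show "j = int i + 1 - int r" using garr_tab_edge_differs_iff[OF z same r'(1,2)] j by simp
qed

lemma garr_tab_edge_pos:
  assumes "(r, c) \<in> skew_cells mm P Q" "T (r, c) = i"
  shows "1 \<le> garr mm P Q T (int i) (int i + 1 - int r)"
proof -
  have r: "1 \<le> r" "r \<le> mm" using assms by (auto simp: mem_skew_cells)
  have "c \<in> {c'. (r, c') \<in> skew_cells mm P Q \<and> int (T (r, c')) \<le> int i}"
    using assms by simp
  then have "card {c'. (r, c') \<in> skew_cells mm P Q \<and> int (T (r, c')) \<le> int i} \<noteq> 0"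
    using finite_skew_row by (metis card_0_eq empty_iff)
  then show ?thesis using garr_row[OF r, of P Q T "int i"] by simp
qed

section \<open>Embeddings of coloured graphs\<close>

lemma col_path_subset_if_invariant:
  assumes p: "col_path E i xs" and inv: "\<And>a b. E a i b \<Longrightarrow> a \<in> B \<longleftrightarrow> b \<in> B"
    and meet: "x \<in> set xs" "x \<in> B"
  shows "set xs \<subseteq> B"
proof -
  have "xs ! k \<in> B \<longleftrightarrow> xs ! 0 \<in> B" if "k < length xs" for k
    using that
  proof (induction k)
    case (Suc k)
    then show ?case using inv[of "xs ! k" "xs ! Suc k"] p unfolding col_path_def by simp
  qed simp
  then show ?thesis using meet by (metis in_set_conv_nth subsetI)
qed

lemma component_subset:
  assumes "x \<in> A" and "\<And>a i b. i \<in> J \<Longrightarrow> E a i b \<Longrightarrow> a \<in> A \<and> b \<in> A"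
  shows "component E J x \<subseteq> A"
proof
  fix s assume "s \<in> component E J x"
  then have "(col_adj E J)\<^sup>*\<^sup>* x s" unfolding component_def by simp
  then show "s \<in> A"
    by (induction rule: rtranclp_induct) (use assms in \<open>auto simp: col_adj_def\<close>)
qed

locale colour_embedding =
  fixes E :: "'a \<Rightarrow> nat \<Rightarrow> 'a \<Rightarrow> bool" and E' :: "'b \<Rightarrow> nat \<Rightarrow> 'b \<Rightarrow> bool"
    and A :: "'a set" and f :: "'a \<Rightarrow> 'b" and i i' :: nat
  assumes inj: "inj_on f A"
    and edge_in: "E a i b \<Longrightarrow> a \<in> A \<and> b \<in> A"
    and edge_iff: "a \<in> A \<Longrightarrow> b \<in> A \<Longrightarrow> E a i b \<longleftrightarrow> E' (f a) i' (f b)"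
    and image_closed: "E' a' i' b' \<Longrightarrow> a' \<in> f ` A \<longleftrightarrow> b' \<in> f ` A"
begin

lemma col_path_image:
  assumes "col_path E i ys"
  shows "col_path E' i' (map f ys)"
proof -
  have "E' (f (ys ! k)) i' (f (ys ! Suc k))" if "Suc k < length ys" for k
  proof -
    have e: "E (ys ! k) i (ys ! Suc k)" using assms that unfolding col_path_def by blast
    then show ?thesis using edge_iff[of "ys ! k" "ys ! Suc k"] edge_in[OF e] by simp
  qed
  then show ?thesis using assms unfolding col_path_def by simp
qed

lemma col_path_within: "col_path E i ys \<Longrightarrow> y \<in> set ys \<Longrightarrow> y \<in> A \<Longrightarrow> set ys \<subseteq> A"
  by (rule col_path_subset_if_invariant) (use edge_in in blast)+

lemma col_path_lift:
  assumes p: "col_path E' i' xs" and meet: "x \<in> set xs" "x \<in> f ` A"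
  obtains ys where "set ys \<subseteq> A" "xs = map f ys" "col_path E i ys"
proof
  have s: "set xs \<subseteq> f ` A"
    by (rule col_path_subset_if_invariant[OF p image_closed meet])
  define ys where "ys = map (inv_into A f) xs"
  show xs: "xs = map f ys"
    unfolding ys_def using s by (auto simp: f_inv_into_f intro!: map_idI[symmetric])
  show sA: "set ys \<subseteq> A"
    unfolding ys_def using s by (auto intro: inv_into_into)
  have "E (ys ! k) i (ys ! Suc k)" if "Suc k < length ys" for k
  proof -
    have "E' (f (ys ! k)) i' (f (ys ! Suc k))"
      using p that xs unfolding col_path_def by (metis length_map nth_map Suc_lessD)
    moreover have "ys ! k \<in> A" "ys ! Suc k \<in> A" using sA that by auto
    ultimately show ?thesis using edge_iff by blast
  qed
  then show "col_path E i ys"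
    using p unfolding col_path_def ys_def by simp
qed

lemma component_image:
  assumes x: "x \<in> A"
  shows "component E' {i'} (f x) = f ` component E {i} x"
proof
  show "component E' {i'} (f x) \<subseteq> f ` component E {i} x"
  proof
    fix s assume "s \<in> component E' {i'} (f x)"
    then have "(col_adj E' {i'})\<^sup>*\<^sup>* (f x) s" unfolding component_def by simp
    then have "\<exists>y \<in> A. s = f y \<and> (col_adj E {i})\<^sup>*\<^sup>* x y"
    proof (induction rule: rtranclp_induct)
      case (step b c)
      then obtain y where y: "y \<in> A" "b = f y" "(col_adj E {i})\<^sup>*\<^sup>* x y" by blast
      from step.hyps(2) have e: "E' b i' c \<or> E' c i' b" unfolding col_adj_def by blast
      then obtain y' where y': "y' \<in> A" "c = f y'"
        using image_closed y by blast
      then have "E y i y' \<or> E y' i y"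
        using e y edge_iff[of y y'] edge_iff[of y' y] by simp
      then have "col_adj E {i} y y'" unfolding col_adj_def by blast
      then show ?case using y y' by (blast intro: rtranclp.rtrancl_into_rtrancl)
    qed (use x in blast)
    then show "s \<in> f ` component E {i} x" unfolding component_def by blast
  qed
next
  show "f ` component E {i} x \<subseteq> component E' {i'} (f x)"
  proof
    fix s assume "s \<in> f ` component E {i} x"
    then obtain y where y: "s = f y" "(col_adj E {i})\<^sup>*\<^sup>* x y" unfolding component_def by blast
    from y(2) have "(col_adj E' {i'})\<^sup>*\<^sup>* (f x) (f y)"
    proof (induction rule: rtranclp_induct)
      case (step b c)
      then have "E b i c \<or> E c i b" unfolding col_adj_def by blast
      then have "E' (f b) i' (f c) \<or> E' (f c) i' (f b)"
        using edge_in edge_iff[of b c] edge_iff[of c b] by blast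
      then have "col_adj E' {i'} (f b) (f c)" unfolding col_adj_def by blast
      then show ?case using step.IH by (rule rtranclp.rtrancl_into_rtrancl[rotated])
    qed simp
    then show "s \<in> component E' {i'} (f x)" unfolding component_def using y by simp
  qed
qed

text \<open>Both \<open>comp_rank\<close> and \<open>comp_length\<close> maximise path lengths subject to a condition on
  the path; it suffices that the condition meets the image and is transported by \<open>f\<close>.\<close>

lemma path_lengths_image:
  assumes meets: "\<And>xs. col_path E' i' xs \<Longrightarrow> R' xs \<Longrightarrow> \<exists>x \<in> set xs. x \<in> f ` A"
    and transport: "\<And>ys. col_path E i ys \<Longrightarrow> set ys \<subseteq> A \<Longrightarrow> R' (map f ys) \<longleftrightarrow> R ys"
    and R_meets: "\<And>ys. col_path E i ys \<Longrightarrow> R ys \<Longrightarrow> \<exists>y \<in> set ys. y \<in> A"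
  shows "{length xs - 1 | xs. col_path E' i' xs \<and> R' xs} = {length ys - 1 | ys. col_path E i ys \<and> R ys}"
proof (intro set_eqI iffI)
  fix d assume "d \<in> {length xs - 1 | xs. col_path E' i' xs \<and> R' xs}"
  then obtain xs where xs: "d = length xs - 1" "col_path E' i' xs" "R' xs" by blast
  obtain x where "x \<in> set xs" "x \<in> f ` A" using meets[OF xs(2,3)] by blast
  with xs(2) obtain ys where "set ys \<subseteq> A" "xs = map f ys" "col_path E i ys"
    by (rule col_path_lift)
  then show "d \<in> {length ys - 1 | ys. col_path E i ys \<and> R ys}"
    using xs transport by auto
next
  fix d assume "d \<in> {length ys - 1 | ys. col_path E i ys \<and> R ys}"
  then obtain ys where ys: "d = length ys - 1" "col_path E i ys" "R ys" by blast
  have "set ys \<subseteq> A" using R_meets[OF ys(2,3)] col_path_within[OF ys(2)] by blast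
  then show "d \<in> {length xs - 1 | xs. col_path E' i' xs \<and> R' xs}"
    using ys col_path_image transport by (intro CollectI exI[of _ "map f ys"]) auto
qed

lemma comp_rank_image:
  assumes x: "x \<in> A"
  shows "comp_rank E' i' (f x) = comp_rank E i x"
proof -
  have "{length xs - 1 | xs. col_path E' i' xs \<and> last xs = f x}
      = {length ys - 1 | ys. col_path E i ys \<and> last ys = x}"
  proof (rule path_lengths_image)
    fix ys assume ys: "col_path E i ys" "set ys \<subseteq> A"
    then have "ys \<noteq> []" by (simp add: col_path_def)
    then show "last (map f ys) = f x \<longleftrightarrow> last ys = x"
      using inj ys(2) x by (metis inj_onD last_in_set last_map subsetD)
  next
    fix xs assume "col_path E' i' xs" "last xs = f x"
    then show "\<exists>y \<in> set xs. y \<in> f ` A" using x by (metis col_path_def imageI last_in_set)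
  qed (use x in \<open>auto simp: col_path_def\<close>)
  then show ?thesis unfolding comp_rank_def by simp
qed

lemma comp_length_image:
  assumes x: "x \<in> A"
  shows "comp_length E' i' (f x) = comp_length E i x"
proof -
  have C: "component E {i} x \<subseteq> A"
    by (rule component_subset[OF x]) (use edge_in in blast)
  have "{length xs - 1 | xs. col_path E' i' xs \<and> hd xs \<in> component E' {i'} (f x)}
      = {length ys - 1 | ys. col_path E i ys \<and> hd ys \<in> component E {i} x}"
  proof (rule path_lengths_image)
    fix ys assume ys: "col_path E i ys" "set ys \<subseteq> A"
    then have "ys \<noteq> []" by (simp add: col_path_def)
    then show "hd (map f ys) \<in> component E' {i'} (f x) \<longleftrightarrow> hd ys \<in> component E {i} x"
      using inj_on_image_mem_iff[OF inj _ C] ys(2) component_image[OF x] by (simp add: hd_map subsetD)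
  next
    fix xs assume xs: "col_path E' i' xs" "hd xs \<in> component E' {i'} (f x)"
    then have "hd xs \<in> f ` A" using component_image[OF x] C by auto
    then show "\<exists>y \<in> set xs. y \<in> f ` A" using xs(1) by (metis col_path_def hd_in_set)
  next
    fix ys assume "col_path E i ys" "hd ys \<in> component E {i} x"
    then show "\<exists>y \<in> set ys. y \<in> A" using C by (metis col_path_def hd_in_set subsetD)
  qed
  then show ?thesis unfolding comp_length_def by simp
qed

lemma weight_image: "x \<in> A \<Longrightarrow> weight E' i' (f x) = weight E i x"
  by (simp add: weight_def comp_rank_image comp_length_image)

end

lemma Cset_add_eq:
  "Cset (m + n) (a + int m) = {a - int n + 1 .. a} \<union> (\<lambda>k. k + int m) ` Cset m a"
proof -
  have "(\<lambda>k. k + int m) ` Cset m a = {a + 1 .. a + int m}"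
    unfolding Cset_def by (auto simp: image_iff intro!: bexI[where x = "_ - int m"])
  then show ?thesis unfolding Cset_def by auto
qed

lemma Cset_add_minus_eq:
  assumes "j \<in> Cset m a"
  shows "Cset (m + n) (a + int m) - {j + int m}
           = {a - int n + 1 .. a} \<union> (\<lambda>k. k + int m) ` (Cset m a - {j})"
proof -
  have "(\<lambda>k. k + int m) ` (Cset m a - {j}) = (\<lambda>k. k + int m) ` Cset m a - {j + int m}"
    by (simp add: image_set_diff inj_on_def)
  then show ?thesis using assms unfolding Cset_add_eq by (auto simp: Cset_def)
qed

lemma prod_Cset_add_split:
  assumes "B \<subseteq> Cset m a"
  shows "prod h ({a - int n + 1 .. a} \<union> (\<lambda>k. k + int m) ` B)
           = prod h {a - int n + 1 .. a} * (\<Prod>k\<in>B. h (k + int m))"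
proof -
  have fin: "finite B" using assms finite_subset by (auto simp: Cset_def)
  have "{a - int n + 1 .. a} \<inter> (\<lambda>k. k + int m) ` B = {}"
    using assms by (auto simp: Cset_def)
  then have "prod h ({a - int n + 1 .. a} \<union> (\<lambda>k. k + int m) ` B)
      = prod h {a - int n + 1 .. a} * prod h ((\<lambda>k. k + int m) ` B)"
    using fin by (simp add: prod.union_disjoint)
  also have "prod h ((\<lambda>k. k + int m) ` B) = (\<Prod>k\<in>B. h (k + int m))"
    by (simp add: prod.reindex inj_on_def)
  finally show ?thesis .
qed

lemma prod_interval_reflect: "prod h {a - int n + 1 .. a} = (\<Prod>s<n. h (a - int s))"
proof -
  have "{a - int n + 1 .. a} = (\<lambda>s. a - int s) ` {..<n}"
    by (auto simp: image_iff intro!: bexI[where x = "nat (a - _)"])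
  then show ?thesis by (simp add: prod.reindex inj_on_def)
qed

section \<open>The embedding on tableaux\<close>

locale skew_embedding =
  fixes m n :: nat and P Q :: "nat \<Rightarrow> nat"
  assumes P_antimono: "\<forall>r r'. 1 \<le> r \<and> r \<le> r' \<and> r' \<le> m \<longrightarrow> P r' \<le> P r"
    and Q_antimono: "\<forall>r r'. 1 \<le> r \<and> r \<le> r' \<and> r' \<le> m \<longrightarrow> Q r' \<le> Q r"
    and Q_le_P: "\<forall>r. 1 \<le> r \<and> r \<le> m \<longrightarrow> Q r \<le> P r"
    and column_card: "\<forall>c. card {r. (r, c) \<in> skew_cells m P Q} \<le> n"
begin

abbreviation "cellsL \<equiv> skew_cells m P Q"
abbreviation "cellsK \<equiv> skew_cells (m + n) (ext_P m P) zero_Q"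
abbreviation "L \<equiv> skew_tabs m n P Q"
abbreviation "K \<equiv> skew_tabs (m + n) (m + n) (ext_P m P) zero_Q"
abbreviation "EL \<equiv> tab_edge m n P Q"
abbreviation "EK \<equiv> tab_edge (m + n) (m + n) (ext_P m P) zero_Q"
abbreviation "garrK \<equiv> garr (m + n) (ext_P m P) zero_Q"

lemma mem_cellsK: "(r, c) \<in> cellsK \<longleftrightarrow> 1 \<le> r \<and> r \<le> m \<and> 1 \<le> c \<and> c \<le> P r"
  by (auto simp: mem_skew_cells ext_P_def zero_Q_def split: if_splits)

lemma Q_part_cell:
  assumes "(r, c) \<in> cellsK" "(r, c) \<notin> cellsL"
  shows "1 \<le> r" "r \<le> m" "1 \<le> c" "c \<le> Q r"
  using assms unfolding mem_cellsK by (auto simp: mem_skew_cells)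

lemma cellsL_subset_cellsK: "cellsL \<subseteq> cellsK"
  by (auto simp: skew_cells_def ext_P_def zero_Q_def)

lemma Q_cell_in_cellsK: "1 \<le> r \<Longrightarrow> r \<le> m \<Longrightarrow> 1 \<le> c \<Longrightarrow> c \<le> Q r \<Longrightarrow> (r, c) \<in> cellsK"
  using Q_le_P by (force simp: mem_cellsK)

definition Q_column_length :: "nat \<Rightarrow> nat" where
  "Q_column_length c = Max (insert 0 {s. 1 \<le> s \<and> s \<le> m \<and> c \<le> Q s})"

lemma Q_column_length_le: "Q_column_length c \<le> m"
  unfolding Q_column_length_def by (subst Max_le_iff) auto

lemma le_Q_column_length_iff:
  assumes "1 \<le> s" "s \<le> m"
  shows "s \<le> Q_column_length c \<longleftrightarrow> c \<le> Q s"
proof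
  assume "c \<le> Q s"
  then show "s \<le> Q_column_length c"
    unfolding Q_column_length_def using assms by (intro Max_ge) auto
next
  let ?h = "Q_column_length c"
  assume s: "s \<le> ?h"
  have "?h \<in> insert 0 {s. 1 \<le> s \<and> s \<le> m \<and> c \<le> Q s}"
    unfolding Q_column_length_def by (rule Max_in) auto
  then have "1 \<le> ?h \<and> ?h \<le> m \<and> c \<le> Q ?h" using s assms by auto
  then show "c \<le> Q s" using Q_antimono s assms by (meson le_trans)
qed

lemma Q_column_length_antimono:
  assumes "c \<le> c'"
  shows "Q_column_length c' \<le> Q_column_length c"
proof (cases "Q_column_length c' = 0")
  case False
  then have h: "1 \<le> Q_column_length c'" "Q_column_length c' \<le> m"
    using Q_column_length_le by auto
  then have "c' \<le> Q (Q_column_length c')" using le_Q_column_length_iff by blast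
  then show ?thesis using le_Q_column_length_iff[OF h, of c] assms by simp
qed simp

lemma cellsL_below:
  assumes "(r, c) \<in> cellsL" "(r', c) \<in> cellsK" "r \<le> r'"
  shows "(r', c) \<in> cellsL"
proof -
  have "r' \<le> m" "c \<le> P r'" using assms(2) unfolding mem_cellsK by auto
  moreover have "1 \<le> r" "Q r < c" using assms(1) by (auto simp: mem_skew_cells)
  moreover have "Q r' \<le> Q r" using Q_antimono calculation assms(3) by simp
  ultimately show ?thesis using assms(3) by (simp add: mem_skew_cells)
qed

text \<open>The cells of Q in column \<open>c\<close> receive the entries \<open>m - Q'\<^sub>c + 1, \<dots>, m\<close> from top to
  bottom (\<open>Q'\<close> the conjugate partition); then at every level \<open>k < m\<close> row \<open>r \<le> k\<close> of the image
  counts exactly \<open>Q\<^sub>r\<^sub>+\<^sub>m\<^sub>-\<^sub>k\<close> entries, as the first parallelogram column of \<open>\<phi>\<close> prescribes.\<close>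

definition phi_tab :: "(nat \<times> nat \<Rightarrow> nat) \<Rightarrow> nat \<times> nat \<Rightarrow> nat" where
  "phi_tab x = (\<lambda>(r, c).
     if 1 \<le> r \<and> r \<le> m \<and> 1 \<le> c \<and> c \<le> Q r then r + m - Q_column_length c
     else if (r, c) \<in> cellsL then x (r, c) + m else 0)"

lemma phi_tab_Q_cell:
  "1 \<le> r \<Longrightarrow> r \<le> m \<Longrightarrow> 1 \<le> c \<Longrightarrow> c \<le> Q r \<Longrightarrow> phi_tab x (r, c) = r + m - Q_column_length c"
  by (simp add: phi_tab_def)

lemma phi_tab_L_cell: "w \<in> cellsL \<Longrightarrow> phi_tab x w = x w + m"
  by (cases w) (auto simp: phi_tab_def mem_skew_cells)

lemma phi_tab_outside: "w \<notin> cellsK \<Longrightarrow> phi_tab x w = 0"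
  using Q_cell_in_cellsK cellsL_subset_cellsK by (cases w) (auto simp: phi_tab_def)

lemma phi_tab_Q_cell_bounds:
  assumes "1 \<le> r" "r \<le> m" "1 \<le> c" "c \<le> Q r"
  shows "r \<le> phi_tab x (r, c)" "phi_tab x (r, c) \<le> m"
proof -
  have "r \<le> Q_column_length c" using assms le_Q_column_length_iff by blast
  then show "r \<le> phi_tab x (r, c)" "phi_tab x (r, c) \<le> m"
    using assms Q_column_length_le[of c] by (simp_all add: phi_tab_Q_cell)
qed

lemma phi_tab_Q_part:
  assumes "w \<in> cellsK" "w \<notin> cellsL"
  shows "phi_tab x w = phi_tab y w" "phi_tab x w \<le> m"
proof -
  obtain r c where "w = (r, c)" by (cases w)
  then show "phi_tab x w = phi_tab y w" "phi_tab x w \<le> m"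
    using Q_part_cell[of r c] assms phi_tab_Q_cell_bounds[of r c x] by (simp_all add: phi_tab_Q_cell)
qed

lemma phi_tab_L_part_gt: "x \<in> L \<Longrightarrow> w \<in> cellsL \<Longrightarrow> m < phi_tab x w"
  using skew_tabsD(2)[of x m n P Q "fst w" "snd w"] phi_tab_L_cell[of w x] by simp

lemma phi_tab_in_K:
  assumes x: "x \<in> L"
  shows "phi_tab x \<in> K"
proof (rule skew_tabsI)
  fix w assume "w \<notin> cellsK" then show "phi_tab x w = 0" by (rule phi_tab_outside)
next
  fix r c assume rc: "(r, c) \<in> cellsK"
  then show "1 \<le> phi_tab x (r, c) \<and> phi_tab x (r, c) \<le> m + n"
  proof (cases "(r, c) \<in> cellsL")
    case True
    then show ?thesis using skew_tabsD(2)[OF x True] by (simp add: phi_tab_L_cell)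
  next
    case False
    then show ?thesis using Q_part_cell[OF rc] phi_tab_Q_cell_bounds[of r c x] by simp
  qed
next
  fix r c c' assume rc: "(r, c) \<in> cellsK" and rc': "(r, c') \<in> cellsK" and cc: "c < c'"
  show "phi_tab x (r, c) \<le> phi_tab x (r, c')"
  proof (cases "(r, c') \<in> cellsL")
    case c'L: True
    show ?thesis
    proof (cases "(r, c) \<in> cellsL")
      case True
      then show ?thesis
        using skew_tabsD(3)[OF x True c'L cc] phi_tab_L_cell[OF True] phi_tab_L_cell[OF c'L] by simp
    next
      case False
      then show ?thesis using phi_tab_Q_part(2)[OF rc False, of x] phi_tab_L_part_gt[OF x c'L] by linarith
    qed
  next
    case False
    then have c': "1 \<le> r" "r \<le> m" "1 \<le> c'" "c' \<le> Q r"
      using Q_part_cell[OF rc'] by auto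
    moreover have "1 \<le> c" "c \<le> Q r" using cc rc c' by (auto simp: mem_cellsK)
    ultimately show ?thesis using Q_column_length_antimono[of c c'] cc by (simp add: phi_tab_Q_cell)
  qed
next
  fix r r' c assume rc: "(r, c) \<in> cellsK" and rc': "(r', c) \<in> cellsK" and rr: "r < r'"
  show "phi_tab x (r, c) < phi_tab x (r', c)"
  proof (cases "(r, c) \<in> cellsL")
    case True
    then have "(r', c) \<in> cellsL" using cellsL_below rc' rr by simp
    then show ?thesis
      using True skew_tabsD(4)[OF x True _ rr] by (simp add: phi_tab_L_cell)
  next
    case False
    then have a: "1 \<le> r" "r \<le> m" "1 \<le> c" "c \<le> Q r" using Q_part_cell[OF rc] by auto
    show ?thesis
    proof (cases "(r', c) \<in> cellsL")
      case True
      then show ?thesis using phi_tab_Q_cell_bounds(2)[OF a, of x] phi_tab_L_part_gt[OF x True] by simp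
    next
      case False
      then have b: "1 \<le> r'" "r' \<le> m" "c \<le> Q r'" using Q_part_cell[OF rc'] by auto
      then have "r' \<le> Q_column_length c" using le_Q_column_length_iff by blast
      then show ?thesis using a b rr Q_column_length_le[of c] by (simp add: phi_tab_Q_cell)
    qed
  qed
qed

lemma row_count_phi_tab_high:
  assumes x: "x \<in> L" and r: "1 \<le> r" "r \<le> m" and k: "int m \<le> k"
  shows "card {c. (r, c) \<in> cellsK \<and> int (phi_tab x (r, c)) \<le> k}
           = Q r + card {c. (r, c) \<in> cellsL \<and> int (x (r, c)) \<le> k - int m}"
proof -
  define SL where "SL = {c. (r, c) \<in> cellsL \<and> int (x (r, c)) \<le> k - int m}"
  have "{c. (r, c) \<in> cellsK \<and> int (phi_tab x (r, c)) \<le> k} = {1..Q r} \<union> SL"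
  proof (intro set_eqI iffI)
    fix c assume c: "c \<in> {c. (r, c) \<in> cellsK \<and> int (phi_tab x (r, c)) \<le> k}"
    show "c \<in> {1..Q r} \<union> SL"
    proof (cases "(r, c) \<in> cellsL")
      case True
      then show ?thesis using c phi_tab_L_cell[OF True] unfolding SL_def by simp
    next
      case False
      then show ?thesis using c Q_part_cell[of r c] by auto
    qed
  next
    fix c assume c: "c \<in> {1..Q r} \<union> SL"
    show "c \<in> {c. (r, c) \<in> cellsK \<and> int (phi_tab x (r, c)) \<le> k}"
    proof (cases "c \<in> SL")
      case True
      then have "(r, c) \<in> cellsL" unfolding SL_def by simp
      then show ?thesis using True cellsL_subset_cellsK phi_tab_L_cell unfolding SL_def by auto
    next
      case False
      then have cc: "1 \<le> c" "c \<le> Q r" using c by auto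
      then show ?thesis using k Q_cell_in_cellsK[OF r cc] phi_tab_Q_cell_bounds(2)[OF r cc, of x] by simp
    qed
  qed
  moreover have "{1..Q r} \<inter> SL = {}" unfolding SL_def by (auto simp: mem_skew_cells)
  moreover have "finite SL" unfolding SL_def by (rule finite_skew_row)
  ultimately show ?thesis unfolding SL_def[symmetric] by (simp add: card_Un_disjoint)
qed

lemma row_count_phi_tab_low:
  assumes x: "x \<in> L" and r: "1 \<le> r" "r \<le> m" and k: "0 \<le> k" "\<not> int m \<le> k"
  shows "card {c. (r, c) \<in> cellsK \<and> int (phi_tab x (r, c)) \<le> k}
           = (if k < int r then 0 else Q (r + m - nat k))"
proof -
  have notL: "\<not> int (phi_tab x (r, c)) \<le> k" if "(r, c) \<in> cellsL" for c
    using phi_tab_L_part_gt[OF x that] k by simp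
  show ?thesis
  proof (cases "k < int r")
    case True
    have "\<not> int (phi_tab x (r, c)) \<le> k" if "(r, c) \<in> cellsK" for c
    proof (cases "(r, c) \<in> cellsL")
      case False
      then show ?thesis using phi_tab_Q_cell_bounds(1)[OF Q_part_cell[OF that False], of x] True by simp
    qed (use notL in blast)
    then have "{c. (r, c) \<in> cellsK \<and> int (phi_tab x (r, c)) \<le> k} = {}" by blast
    then show ?thesis by (simp only: card.empty if_P[OF True])
  next
    case False
    define s where "s = r + m - nat k"
    have s: "1 \<le> s" "s \<le> m" "r < s" using False k r unfolding s_def by auto
    have "{c. (r, c) \<in> cellsK \<and> int (phi_tab x (r, c)) \<le> k} = {1..Q s}"
    proof (intro set_eqI iffI)
      fix c assume c: "c \<in> {c. (r, c) \<in> cellsK \<and> int (phi_tab x (r, c)) \<le> k}"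
      then have cc: "1 \<le> c" "c \<le> Q r" using Q_part_cell[of r c] notL by auto
      have "r + m - Q_column_length c \<le> k" using c phi_tab_Q_cell[OF r cc] by simp
      then have "s \<le> Q_column_length c" unfolding s_def using False k by linarith
      then show "c \<in> {1..Q s}" using le_Q_column_length_iff[OF s(1,2)] cc by simp
    next
      fix c assume c: "c \<in> {1..Q s}"
      then have cc: "1 \<le> c" "c \<le> Q r" using Q_antimono s r by (auto intro: le_trans)
      have "s \<le> Q_column_length c" using le_Q_column_length_iff[OF s(1,2)] c by simp
      then have "r + m - Q_column_length c \<le> k" unfolding s_def using False k by linarith
      then show "c \<in> {c. (r, c) \<in> cellsK \<and> int (phi_tab x (r, c)) \<le> k}"
        using Q_cell_in_cellsK[OF r cc] phi_tab_Q_cell[OF r cc] by simp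
    qed
    then show ?thesis using False unfolding s_def by simp
  qed
qed

lemma garr_phi_tab:
  assumes x: "x \<in> L" and k: "0 \<le> k" and l: "l \<in> Cset (m + n) k"
  shows "garrK (phi_tab x) k l = phi_arr m (garr m P Q x) k l"
proof -
  define r where "r = nat (k + 1 - l)"
  have r: "1 \<le> r" "r \<le> m + n" and lr: "l = k + 1 - int r"
    using l k unfolding r_def Cset_def by auto
  have gK: "garrK (phi_tab x) k l = int (card {c. (r, c) \<in> cellsK \<and> int (phi_tab x (r, c)) \<le> k})"
    unfolding lr using garr_row[OF r, of "ext_P m P" zero_Q "phi_tab x" k] by (simp add: zero_Q_def)
  show ?thesis
  proof (cases "r \<le> m")
    case False
    then have "{c. (r, c) \<in> cellsK \<and> int (phi_tab x (r, c)) \<le> k} = {}" by (auto simp: mem_cellsK)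
    then have "garrK (phi_tab x) k l = 0" unfolding gK by (simp only: card.empty of_nat_0)
    then show ?thesis using False lr k unfolding phi_arr_def by auto
  next
    case rm: True
    show ?thesis
    proof (cases "int m \<le> k")
      case True
      have "phi_arr m (garr m P Q x) k l = garr m P Q x (k - int m) (l - int m)"
        using True lr r rm unfolding phi_arr_def by auto
      also have "l - int m = (k - int m) + 1 - int r" using lr by simp
      finally have "phi_arr m (garr m P Q x) k l = garr m P Q x (k - int m) ((k - int m) + 1 - int r)" .
      then show ?thesis
        using gK row_count_phi_tab_high[OF x r(1) rm True] garr_row[OF r(1) rm, of P Q x "k - int m"]
        by simp
    next
      case False
      show ?thesis
      proof (cases "k < int r")
        case True
        then show ?thesis
          using gK row_count_phi_tab_low[OF x r(1) rm k False] lr unfolding phi_arr_def by simp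
      next
        case kr: False
        define s where "s = r + m - nat k"
        have s: "1 \<le> s" "s \<le> m" using kr False k unfolding s_def by auto
        have "phi_arr m (garr m P Q x) k l = garr m P Q x 0 (l - int m)"
          using False kr lr r rm k unfolding phi_arr_def by auto
        also have "l - int m = 0 + 1 - int s" using lr kr False k unfolding s_def by simp
        also have "garr m P Q x 0 (0 + 1 - int s) = int (Q s)" by (rule garr_level_zero[OF x s])
        finally show ?thesis
          using gK row_count_phi_tab_low[OF x r(1) rm k False] kr unfolding s_def by simp
      qed
    qed
  qed
qed

lemma phi_eq_phi_tab:
  assumes x: "x \<in> L"
  shows "phi m n P Q x = phi_tab x"
  unfolding phi_def
proof (rule the_equality)
  show "phi_tab x \<in> K \<and> (\<forall>k\<in>{0..int (m + n)}. \<forall>l\<in>Cset (m + n) k.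
      garrK (phi_tab x) k l = phi_arr m (garr m P Q x) k l)"
    using phi_tab_in_K[OF x] garr_phi_tab[OF x] by auto
next
  fix y
  assume y: "y \<in> K \<and> (\<forall>k\<in>{0..int (m + n)}. \<forall>l\<in>Cset (m + n) k.
      garrK y k l = phi_arr m (garr m P Q x) k l)"
  show "y = phi_tab x"
    by (rule skew_tabs_eq_if_garr_eq) (use y phi_tab_in_K[OF x] garr_phi_tab[OF x] in auto)
qed

lemma inj_on_phi_tab: "inj_on phi_tab L"
proof (rule inj_onI)
  fix S T assume S: "S \<in> L" and T: "T \<in> L" and eq: "phi_tab S = phi_tab T"
  show "S = T"
  proof (rule skew_tabs_eqI[OF S T])
    fix w assume "w \<in> cellsL"
    then show "S w = T w" using eq phi_tab_L_cell[of w S] phi_tab_L_cell[of w T] by simp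
  qed
qed

lemma phi_tab_agree_off_cell:
  assumes "\<forall>w \<in> cellsL. w \<noteq> z \<longrightarrow> S w = T w"
  shows "\<forall>w \<in> cellsK. w \<noteq> z \<longrightarrow> phi_tab S w = phi_tab T w"
proof (intro ballI impI)
  fix w assume w: "w \<in> cellsK" "w \<noteq> z"
  show "phi_tab S w = phi_tab T w"
  proof (cases "w \<in> cellsL")
    case True
    then show ?thesis using assms w phi_tab_L_cell by simp
  qed (rule phi_tab_Q_part(1)[OF w(1)])
qed

lemma tab_edge_iff_phi_tab:
  assumes S: "S \<in> L" and T: "T \<in> L"
  shows "EL S i T \<longleftrightarrow> EK (phi_tab S) (i + m) (phi_tab T)"
proof
  assume "EL S i T"
  then obtain r c where z: "(r, c) \<in> cellsL" "S (r, c) = T (r, c) + 1" "T (r, c) = i"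
    and same: "\<forall>w \<in> cellsL. w \<noteq> (r, c) \<longrightarrow> S w = T w"
    by (rule tab_edgeE)
  show "EK (phi_tab S) (i + m) (phi_tab T)"
    unfolding tab_edge_def
    using phi_tab_in_K[OF S] phi_tab_in_K[OF T] cellsL_subset_cellsK z phi_tab_L_cell[OF z(1)]
      phi_tab_agree_off_cell[OF same]
    by (intro conjI bexI[of _ "(r, c)"]) auto
next
  assume "EK (phi_tab S) (i + m) (phi_tab T)"
  then obtain r c where z: "(r, c) \<in> cellsK" "phi_tab S (r, c) = phi_tab T (r, c) + 1"
      "phi_tab T (r, c) = i + m"
    and same: "\<forall>w \<in> cellsK. w \<noteq> (r, c) \<longrightarrow> phi_tab S w = phi_tab T w"
    by (rule tab_edgeE)
  have zL: "(r, c) \<in> cellsL" using phi_tab_Q_part(1)[OF z(1), of S T] z(2) by auto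
  have "\<forall>w \<in> cellsL. w \<noteq> (r, c) \<longrightarrow> S w = T w"
  proof (intro ballI impI)
    fix w assume w: "w \<in> cellsL" "w \<noteq> (r, c)"
    then have "phi_tab S w = phi_tab T w" using same cellsL_subset_cellsK by blast
    then show "S w = T w" using phi_tab_L_cell[OF w(1)] by simp
  qed
  then show "EL S i T"
    unfolding tab_edge_def using S T zL z phi_tab_L_cell[OF zL] by (intro conjI bexI[of _ "(r, c)"]) auto
qed

lemma in_image_phi_tab:
  assumes y': "y' \<in> K" and x: "x \<in> L"
    and Q_part: "\<forall>w \<in> cellsK - cellsL. y' w = phi_tab x w" and L_part: "\<forall>w \<in> cellsL. m < y' w"
  shows "y' \<in> phi_tab ` L"
proof
  define y where "y = (\<lambda>w. if w \<in> cellsL then y' w - m else 0)"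
  show "y \<in> L"
  proof (rule skew_tabsI)
    fix r c assume rc: "(r, c) \<in> cellsL"
    then have "y' (r, c) \<le> m + n" using skew_tabsD(2)[OF y'] cellsL_subset_cellsK by blast
    then show "1 \<le> y (r, c) \<and> y (r, c) \<le> n" using L_part rc unfolding y_def by fastforce
  next
    fix r c c' assume rc: "(r, c) \<in> cellsL" "(r, c') \<in> cellsL" "c < c'"
    then have "y' (r, c) \<le> y' (r, c')" using skew_tabsD(3)[OF y'] cellsL_subset_cellsK by blast
    then show "y (r, c) \<le> y (r, c')" using rc unfolding y_def by simp
  next
    fix r r' c assume rc: "(r, c) \<in> cellsL" "(r', c) \<in> cellsL" "r < r'"
    then have "y' (r, c) < y' (r', c)" using skew_tabsD(4)[OF y'] cellsL_subset_cellsK by blast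
    then show "y (r, c) < y (r', c)" using rc L_part unfolding y_def by fastforce
  qed (simp add: y_def)
  show "y' = phi_tab y"
  proof (rule skew_tabs_eqI[OF y' phi_tab_in_K[OF \<open>y \<in> L\<close>]])
    fix w assume w: "w \<in> cellsK"
    show "y' w = phi_tab y w"
    proof (cases "w \<in> cellsL")
      case True
      then have "m < y' w" using L_part by blast
      then show ?thesis using phi_tab_L_cell[OF True] True unfolding y_def by simp
    next
      case False
      then show ?thesis using Q_part w phi_tab_Q_part(1)[OF w False, of x y] by simp
    qed
  qed
qed

lemma in_image_phi_tab_if_agree_off_cell:
  assumes x: "x \<in> L" and u: "u \<in> K" and z: "z \<in> cellsK" and big: "m < u z" "m < phi_tab x z"
    and agree: "\<forall>w \<in> cellsK. w \<noteq> z \<longrightarrow> u w = phi_tab x w"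
  shows "u \<in> phi_tab ` L"
proof (rule in_image_phi_tab[OF u x])
  have zL: "z \<in> cellsL"
  proof (rule ccontr)
    assume "z \<notin> cellsL"
    then show False using phi_tab_Q_part(2)[OF z _, of x] big(2) by simp
  qed
  show "\<forall>w \<in> cellsK - cellsL. u w = phi_tab x w"
  proof
    fix w assume "w \<in> cellsK - cellsL"
    then have "w \<in> cellsK" "w \<noteq> z" using zL by auto
    then show "u w = phi_tab x w" using agree by simp
  qed
  show "\<forall>w \<in> cellsL. m < u w"
  proof
    fix w assume w: "w \<in> cellsL"
    show "m < u w"
    proof (cases "w = z")
      case False
      then have "u w = phi_tab x w" using agree w cellsL_subset_cellsK by blast
      then show ?thesis using phi_tab_L_part_gt[OF x w] by simp
    qed (use big in simp)
  qed
qed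

text \<open>An edge of colour \<open>> m\<close> changes an entry \<open>> m\<close>, which lies in \<open>P/Q\<close>; hence it cannot
  leave the image.\<close>

lemma image_phi_tab_edge_closed:
  assumes c: "m < c" and e: "EK a c b"
  shows "a \<in> phi_tab ` L \<longleftrightarrow> b \<in> phi_tab ` L"
proof -
  obtain z where ab: "a \<in> K" "b \<in> K" and z: "z \<in> cellsK" "a z = b z + 1" "b z = c"
    and same: "\<forall>w \<in> cellsK. w \<noteq> z \<longrightarrow> a w = b w"
    using e unfolding tab_edge_def by blast
  have big: "m < a z" "m < b z" using z c by auto
  show ?thesis
  proof
    assume "a \<in> phi_tab ` L"
    then obtain x where x: "x \<in> L" "a = phi_tab x" by blast
    show "b \<in> phi_tab ` L"
      by (rule in_image_phi_tab_if_agree_off_cell[OF x(1) ab(2) z(1)]) (use big same x(2) in auto)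
  next
    assume "b \<in> phi_tab ` L"
    then obtain x where x: "x \<in> L" "b = phi_tab x" by blast
    show "a \<in> phi_tab ` L"
      by (rule in_image_phi_tab_if_agree_off_cell[OF x(1) ab(1) z(1)]) (use big same x(2) in auto)
  qed
qed

subsection \<open>The image as a component\<close>

definition first_row :: "nat \<Rightarrow> nat" where
  "first_row c = (LEAST r. (r, c) \<in> cellsL)"

definition max_tab :: "nat \<times> nat \<Rightarrow> nat" where
  "max_tab = (\<lambda>(r, c). if (r, c) \<in> cellsL then r + 1 - first_row c else 0)"

lemma first_row: "(r, c) \<in> cellsL \<Longrightarrow> (first_row c, c) \<in> cellsL \<and> first_row c \<le> r"
  unfolding first_row_def by (metis (mono_tags, lifting) LeastI Least_le)

lemma column_interval:
  assumes rc: "(r, c) \<in> cellsL" and r': "first_row c \<le> r'" "r' \<le> r"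
  shows "(r', c) \<in> cellsL"
proof -
  have t: "1 \<le> first_row c" "Q (first_row c) < c" using first_row[OF rc] by (auto simp: mem_skew_cells)
  have r: "r \<le> m" "c \<le> P r" using rc by (auto simp: mem_skew_cells)
  have "Q r' \<le> Q (first_row c)" using Q_antimono t r' r by (meson le_trans)
  moreover have "P r \<le> P r'" using P_antimono t r' r by (meson le_trans)
  ultimately show ?thesis using t r' r unfolding mem_skew_cells by simp
qed

lemma max_tab_in_L: "max_tab \<in> L"
proof (rule skew_tabsI)
  fix w assume "w \<notin> cellsL" then show "max_tab w = 0" unfolding max_tab_def by (cases w) auto
next
  fix r c assume rc: "(r, c) \<in> cellsL"
  have t: "first_row c \<le> r" using first_row[OF rc] by blast
  have "{first_row c..r} \<subseteq> {r'. (r', c) \<in> cellsL}" using column_interval[OF rc] by auto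
  moreover have "finite {r'. (r', c) \<in> cellsL}"
    by (rule finite_subset[of _ "{..m}"]) (auto simp: mem_skew_cells)
  ultimately have "card {first_row c..r} \<le> card {r'. (r', c) \<in> cellsL}" by (rule card_mono[rotated])
  moreover have "card {r'. (r', c) \<in> cellsL} \<le> n" using column_card by blast
  ultimately have "r + 1 - first_row c \<le> n" by simp
  then show "1 \<le> max_tab (r, c) \<and> max_tab (r, c) \<le> n" using rc t unfolding max_tab_def by simp
next
  fix r c c' assume rc: "(r, c) \<in> cellsL" and rc': "(r, c') \<in> cellsL" and cc: "c < c'"
  have t: "first_row c \<le> r" "(first_row c, c) \<in> cellsL" using first_row[OF rc] by auto
  have "(first_row c, c') \<in> cellsL"
  proof -
    have "1 \<le> first_row c" "Q (first_row c) < c" "r \<le> m" "c' \<le> P r"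
      using t rc' by (auto simp: mem_skew_cells)
    moreover have "P r \<le> P (first_row c)" using P_antimono t(1) calculation by blast
    ultimately show ?thesis using cc t(1) unfolding mem_skew_cells by simp
  qed
  then have "first_row c' \<le> first_row c" using first_row by blast
  then show "max_tab (r, c) \<le> max_tab (r, c')" using rc rc' t unfolding max_tab_def by simp
next
  fix r r' c assume rc: "(r, c) \<in> cellsL" "(r', c) \<in> cellsL" "r < r'"
  moreover have "first_row c \<le> r" using first_row[OF rc(1)] by blast
  ultimately show "max_tab (r, c) < max_tab (r', c)" unfolding max_tab_def by simp
qed

lemma max_tab_le:
  assumes x: "x \<in> L" and rc: "(r, c) \<in> cellsL"
  shows "max_tab (r, c) \<le> x (r, c)"
  using rc
proof (induction r)
  case (Suc r)
  show ?case
  proof (cases "Suc r = first_row c")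
    case True
    then show ?thesis using Suc.prems skew_tabsD(2)[OF x Suc.prems] unfolding max_tab_def by simp
  next
    case False
    then have t: "first_row c \<le> r" using first_row[OF Suc.prems] by simp
    then have rc: "(r, c) \<in> cellsL" using column_interval[OF Suc.prems t] by simp
    then show ?thesis
      using Suc.IH[OF rc] skew_tabsD(4)[OF x rc Suc.prems] Suc.prems t unfolding max_tab_def by simp
  qed
qed (simp add: mem_skew_cells)

lemma tab_max_eq_max_tab: "tab_max m n P Q = max_tab"
  unfolding tab_max_def
proof (rule the_equality)
  show "max_tab \<in> L \<and> (\<forall>x\<in>L. tab_le m P Q x max_tab)"
    unfolding tab_le_def
  proof (intro conjI ballI max_tab_in_L)
    fix x w assume "x \<in> L" "w \<in> cellsL"
    then show "max_tab w \<le> x w" using max_tab_le[of x "fst w" "snd w"] by simp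
  qed
next
  fix M assume M: "M \<in> L \<and> (\<forall>x\<in>L. tab_le m P Q x M)"
  show "M = max_tab"
  proof (rule skew_tabs_eqI[OF _ max_tab_in_L])
    fix w assume "w \<in> cellsL"
    then show "M w = max_tab w"
      using M max_tab_in_L max_tab_le[of M "fst w" "snd w"] unfolding tab_le_def by (simp add: le_antisym)
  qed (use M in blast)
qed

text \<open>Lowering an entry that exceeds its value in the maximum is legal as soon as the cell
  minimises entry plus column index: a left or upper neighbour blocking the move would be a
  candidate with a smaller sum.\<close>

lemma lower_entry_in_L:
  assumes x: "x \<in> L" and z: "z \<in> cellsL" "max_tab z < x z"
    and minimal: "\<And>w. w \<in> cellsL \<Longrightarrow> max_tab w < x w \<Longrightarrow> x z + snd z \<le> x w + snd w"
  shows "x(z := x z - 1) \<in> L"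
proof (rule skew_tabsI)
  have "1 \<le> max_tab z" using skew_tabsD(2)[OF max_tab_in_L, of "fst z" "snd z"] z by simp
  then show "1 \<le> (x(z := x z - 1)) (r, c) \<and> (x(z := x z - 1)) (r, c) \<le> n" if "(r, c) \<in> cellsL" for r c
    using skew_tabsD(2)[OF x that] skew_tabsD(2)[OF x, of "fst z" "snd z"] z by auto
next
  fix r c c' assume rc: "(r, c) \<in> cellsL" and rc': "(r, c') \<in> cellsL" and cc: "c < c'"
  have "x (r, c) \<noteq> x z" if "(r, c') = z"
  proof
    assume eq: "x (r, c) = x z"
    have "max_tab (r, c) < x (r, c)"
      using skew_tabsD(3)[OF max_tab_in_L rc rc' cc] z(2) eq that by simp
    then show False using minimal[OF rc] eq that cc by auto
  qed
  then show "(x(z := x z - 1)) (r, c) \<le> (x(z := x z - 1)) (r, c')"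
    using skew_tabsD(3)[OF x rc rc' cc] cc by auto
next
  fix r r' c assume rc: "(r, c) \<in> cellsL" and rc': "(r', c) \<in> cellsL" and rr: "r < r'"
  have "x (r, c) \<noteq> x z - 1" if "(r', c) = z"
  proof
    assume eq: "x (r, c) = x z - 1"
    have "max_tab (r, c) < x (r, c)"
      using skew_tabsD(4)[OF max_tab_in_L rc rc' rr] z(2) eq that by simp
    then show False using minimal[OF rc] eq that z(2) by auto
  qed
  then show "(x(z := x z - 1)) (r, c) < (x(z := x z - 1)) (r', c)"
    using skew_tabsD(4)[OF x rc rc' rr] rr by auto
qed (use x z skew_tabsD(1) in auto)

lemma exists_edge_towards_max:
  assumes x: "x \<in> L" and ne: "x \<noteq> max_tab"
  obtains x' v where "x' \<in> L" "1 \<le> v" "v < n" "EL x v x'" "sum x' cellsL < sum x cellsL"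
proof -
  define D where "D = {w \<in> cellsL. max_tab w < x w}"
  have "D \<noteq> {}"
  proof
    assume "D = {}"
    then have "x w = max_tab w" if "w \<in> cellsL" for w
      using max_tab_le[OF x, of "fst w" "snd w"] that unfolding D_def by fastforce
    then show False using ne skew_tabs_eqI[OF x max_tab_in_L] by blast
  qed
  moreover have "finite D"
    unfolding D_def by (rule finite_subset[of _ "Sigma {1..m} (\<lambda>r. {..P r})"]) (auto simp: mem_skew_cells)
  ultimately obtain z where "is_arg_min (\<lambda>w. x w + snd w) (\<lambda>w. w \<in> D) z"
    using ex_is_arg_min_if_finite by blast
  then have z: "z \<in> cellsL" "max_tab z < x z"
    and minimal: "\<And>w. w \<in> cellsL \<Longrightarrow> max_tab w < x w \<Longrightarrow> x z + snd z \<le> x w + snd w"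
    unfolding is_arg_min_linorder D_def by auto
  define x' where "x' = x(z := x z - 1)"
  have x': "x' \<in> L" unfolding x'_def by (rule lower_entry_in_L[OF x z minimal])
  have v: "2 \<le> x z" "x z \<le> n"
    using skew_tabsD(2)[OF max_tab_in_L, of "fst z" "snd z"] skew_tabsD(2)[OF x, of "fst z" "snd z"] z
    by auto
  have "EL x (x z - 1) x'"
    unfolding tab_edge_def using x x' z v unfolding x'_def by (intro conjI bexI[of _ z]) auto
  moreover have "sum x' cellsL < sum x cellsL"
  proof (rule sum_strict_mono_ex1)
    show "finite cellsL"
      by (rule finite_subset[of _ "Sigma {1..m} (\<lambda>r. {..P r})"]) (auto simp: mem_skew_cells)
  qed (use z v in \<open>auto simp: x'_def\<close>)
  ultimately show ?thesis using v by (intro that[OF x', of "x z - 1"]) auto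
qed

abbreviation "J \<equiv> {m + 1 .. m + n - 1}"

lemma max_tab_reaches:
  "x \<in> L \<Longrightarrow> (col_adj EK J)\<^sup>*\<^sup>* (phi_tab max_tab) (phi_tab x)"
proof (induction "sum x cellsL" arbitrary: x rule: less_induct)
  case less
  show ?case
  proof (cases "x = max_tab")
    case False
    then obtain x' v where x': "x' \<in> L" "1 \<le> v" "v < n" "EL x v x'" "sum x' cellsL < sum x cellsL"
      using exists_edge_towards_max[OF less.prems] by blast
    have "EK (phi_tab x) (v + m) (phi_tab x')"
      using tab_edge_iff_phi_tab[OF less.prems x'(1)] x'(4) by blast
    then have "col_adj EK J (phi_tab x') (phi_tab x)"
      unfolding col_adj_def using x'(2,3) by (intro bexI[of _ "v + m"]) auto
    then show ?thesis using less.hyps[OF x'(5) x'(1)] by (rule rtranclp.rtrancl_into_rtrancl[rotated])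
  qed simp
qed

lemma image_phi_tab_eq_component: "phi_tab ` L = component EK J (phi_tab max_tab)"
proof
  show "phi_tab ` L \<subseteq> component EK J (phi_tab max_tab)"
    using max_tab_reaches unfolding component_def by auto
next
  show "component EK J (phi_tab max_tab) \<subseteq> phi_tab ` L"
  proof
    fix s assume "s \<in> component EK J (phi_tab max_tab)"
    then have "(col_adj EK J)\<^sup>*\<^sup>* (phi_tab max_tab) s" unfolding component_def by simp
    then show "s \<in> phi_tab ` L"
    proof (induction rule: rtranclp_induct)
      case (step b c)
      then obtain i where "i \<in> J" "EK b i c \<or> EK c i b" unfolding col_adj_def by blast
      then show ?case using image_phi_tab_edge_closed[of i b c] image_phi_tab_edge_closed[of i c b] step.IH
        by auto
    qed (use max_tab_in_L in blast)
  qed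
qed

lemma colour_embedding_phi_tab:
  assumes "1 \<le> i"
  shows "colour_embedding EL EK L phi_tab i (i + m)"
proof
  show "inj_on phi_tab L" by (rule inj_on_phi_tab)
  show "EL a i b \<Longrightarrow> a \<in> L \<and> b \<in> L" for a b by (rule tab_edge_in_tabs)
  show "a \<in> L \<Longrightarrow> b \<in> L \<Longrightarrow> EL a i b \<longleftrightarrow> EK (phi_tab a) (i + m) (phi_tab b)" for a b
    by (rule tab_edge_iff_phi_tab)
  show "EK a' (i + m) b' \<Longrightarrow> a' \<in> phi_tab ` L \<longleftrightarrow> b' \<in> phi_tab ` L" for a' b'
    using assms by (intro image_phi_tab_edge_closed) auto
qed

subsection \<open>Edge coefficients\<close>

lemma garr_phi_tab_shifted:
  assumes T: "T \<in> L" and a: "0 \<le> a" and k: "k \<in> Cset (m + n) (a + int m)"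
  shows "garrK (phi_tab T) (a + int m) k = (if k \<le> a then 0 else garr m P Q T a (k - int m))"
  using garr_phi_tab[OF T _ k] a k unfolding phi_arr_def by (auto simp: Cset_def)

text \<open>Below level \<open>a + m\<close> the row of \<open>\<phi>(T)\<close> consists of \<open>n\<close> zeros followed by the shifted
  row \<open>a\<close> of \<open>T\<close>; the zeros contribute a factor depending only on \<open>a + e\<close>.\<close>

lemma prod_phi_tab_row:
  assumes T: "T \<in> L" and a: "0 \<le> a" and B: "B \<subseteq> Cset m a"
  shows "(\<Prod>k \<in> {a - int n + 1 .. a} \<union> (\<lambda>k. k + int m) ` B.
            real_of_int (G - garrK (phi_tab T) (a + int m) k + (j + int m) - k - e))
       = (\<Prod>s<n. real_of_int (G + j + int m + int s - (a + e)))
         * (\<Prod>k\<in>B. real_of_int (G - garr m P Q T a k + j - k - e))"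
proof -
  let ?h = "\<lambda>k. real_of_int (G - garrK (phi_tab T) (a + int m) k + (j + int m) - k - e)"
  have "prod ?h {a - int n + 1 .. a} = (\<Prod>s<n. ?h (a - int s))" by (rule prod_interval_reflect)
  also have "\<dots> = (\<Prod>s<n. real_of_int (G + j + int m + int s - (a + e)))"
  proof (rule prod.cong[OF refl])
    fix s assume "s \<in> {..<n}"
    then have "a - int s \<in> Cset (m + n) (a + int m)" by (auto simp: Cset_def)
    then show "?h (a - int s) = real_of_int (G + j + int m + int s - (a + e))"
      using garr_phi_tab_shifted[OF T a] by simp
  qed
  moreover have "(\<Prod>k\<in>B. ?h (k + int m)) = (\<Prod>k\<in>B. real_of_int (G - garr m P Q T a k + j - k - e))"
  proof (rule prod.cong[OF refl])
    fix k assume "k \<in> B"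
    then have "k + int m \<in> Cset (m + n) (a + int m)" "a < k + int m"
      using B by (auto simp: Cset_def)
    then show "?h (k + int m) = real_of_int (G - garr m P Q T a k + j - k - e)"
      using garr_phi_tab_shifted[OF T a] by simp
  qed
  ultimately show ?thesis by (simp add: prod_Cset_add_split[OF B])
qed

lemma diff_pos_phi_tab:
  assumes e: "EL S i T"
  shows "diff_pos (m + n) (ext_P m P) zero_Q (phi_tab S) (phi_tab T) (int (i + m))
           = diff_pos m P Q S T (int i) + int m"
proof -
  obtain r c where z: "(r, c) \<in> cellsL" "S (r, c) = T (r, c) + 1" "T (r, c) = i"
    and same: "\<forall>w \<in> cellsL. w \<noteq> (r, c) \<longrightarrow> S w = T w"
    using e by (rule tab_edgeE)
  have "diff_pos (m + n) (ext_P m P) zero_Q (phi_tab S) (phi_tab T) (int (i + m)) = int (i + m) + 1 - int r"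
    by (rule diff_pos_tab_edge[OF subsetD[OF cellsL_subset_cellsK z(1)] _ _ phi_tab_agree_off_cell[OF same]])
      (use z phi_tab_L_cell[OF z(1)] in auto)
  then show ?thesis using diff_pos_tab_edge[OF z same] by simp
qed

lemma coefficients_phi_tab:
  assumes e: "EL S i T"
  shows "Xcoef (m + n) (ext_P m P) zero_Q (phi_tab T) (phi_tab S) (i + m) = Xcoef m P Q T S i"
    and "Ycoef (m + n) (ext_P m P) zero_Q (phi_tab S) (phi_tab T) (i + m) = Ycoef m P Q S T i"
proof -
  obtain r c where z: "(r, c) \<in> cellsL" "S (r, c) = T (r, c) + 1" "T (r, c) = i"
    and same: "\<forall>w \<in> cellsL. w \<noteq> (r, c) \<longrightarrow> S w = T w"
    using e by (rule tab_edgeE)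
  have T: "T \<in> L" and S: "S \<in> L" using tab_edge_in_tabs[OF e] by auto
  have r: "1 \<le> r" "r \<le> m" using z by (auto simp: mem_skew_cells)
  have i: "1 \<le> i" "i + 1 \<le> n" using skew_tabsD(2)[OF T z(1)] skew_tabsD(2)[OF S z(1)] z by auto
  define j where "j = int i + 1 - int r"
  have j: "j \<in> Cset m (int i)" "int i + 1 \<le> j + int m" using r unfolding j_def Cset_def by auto
  have dL: "diff_pos m P Q S T (int i) = j"
    unfolding j_def by (rule diff_pos_tab_edge[OF z same])
  have dK: "diff_pos (m + n) (ext_P m P) zero_Q (phi_tab S) (phi_tab T) (int (i + m)) = j + int m"
    using diff_pos_phi_tab[OF e] dL by simp
  define G where "G = garr m P Q T (int i) j"
  have G: "1 \<le> G" unfolding G_def j_def by (rule garr_tab_edge_pos[of r c m P Q T i, OF z(1,3)])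
  have GK: "garrK (phi_tab T) (int (i + m)) (j + int m) = G"
    using garr_phi_tab_shifted[OF T, of "int i" "j + int m"] j unfolding G_def by (simp add: Cset_def)
  define Z where "Z c = (\<Prod>s<n. real_of_int (G + j + int m + int s - c))" for c
  have Z: "Z (int i + 1) \<noteq> 0" "Z (int i) \<noteq> 0" using G j unfolding Z_def by auto
  have XN: "(\<Prod>k\<in>Cset (m + n) (int (i + m) + 1).
        real_of_int (G - garrK (phi_tab T) (int (i + m) + 1) k + (j + int m) - k))
      = Z (int i + 1) * (\<Prod>k\<in>Cset m (int i + 1). real_of_int (G - garr m P Q T (int i + 1) k + j - k))"
    using prod_phi_tab_row[OF T, of "int i + 1" "Cset m (int i + 1)" G j 0]
      Cset_add_eq[of m n "int i + 1"] unfolding Z_def by (simp add: algebra_simps)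
  have XD: "(\<Prod>k\<in>Cset (m + n) (int (i + m)) - {j + int m}.
        real_of_int (G - garrK (phi_tab T) (int (i + m)) k + (j + int m) - k - 1))
      = Z (int i + 1) * (\<Prod>k\<in>Cset m (int i) - {j}. real_of_int (G - garr m P Q T (int i) k + j - k - 1))"
    using prod_phi_tab_row[OF T, of "int i" "Cset m (int i) - {j}" G j 1]
      Cset_add_minus_eq[OF j(1), of n] unfolding Z_def by (simp add: algebra_simps)
  have YN: "(\<Prod>k\<in>Cset (m + n) (int (i + m) - 1).
        real_of_int (G - garrK (phi_tab T) (int (i + m) - 1) k + (j + int m) - k - 1))
      = Z (int i) * (\<Prod>k\<in>Cset m (int i - 1). real_of_int (G - garr m P Q T (int i - 1) k + j - k - 1))"
    using prod_phi_tab_row[OF T, of "int i - 1" "Cset m (int i - 1)" G j 1]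
      Cset_add_eq[of m n "int i - 1"] i unfolding Z_def by (simp add: algebra_simps)
  have YD: "(\<Prod>k\<in>Cset (m + n) (int (i + m)) - {j + int m}.
        real_of_int (G - garrK (phi_tab T) (int (i + m)) k + (j + int m) - k))
      = Z (int i) * (\<Prod>k\<in>Cset m (int i) - {j}. real_of_int (G - garr m P Q T (int i) k + j - k))"
    using prod_phi_tab_row[OF T, of "int i" "Cset m (int i) - {j}" G j 0]
      Cset_add_minus_eq[OF j(1), of n] unfolding Z_def by (simp add: algebra_simps)
  show "Xcoef (m + n) (ext_P m P) zero_Q (phi_tab T) (phi_tab S) (i + m) = Xcoef m P Q T S i"
    unfolding Xcoef_def Let_def dK dL GK G_def[symmetric] XN XD using Z by simp
  show "Ycoef (m + n) (ext_P m P) zero_Q (phi_tab S) (phi_tab T) (i + m) = Ycoef m P Q S T i"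
    unfolding Ycoef_def Let_def dK dL GK G_def[symmetric] YN YD using Z by simp
qed

end

theorem proposition6p5:
  fixes m n :: nat and P Q :: "nat \<Rightarrow> nat"
  assumes "2 \<le> n" and "n \<le> m"
    and "\<forall>r r'. 1 \<le> r \<and> r \<le> r' \<and> r' \<le> m \<longrightarrow> P r' \<le> P r"
    and "\<forall>r r'. 1 \<le> r \<and> r \<le> r' \<and> r' \<le> m \<longrightarrow> Q r' \<le> Q r"
    and "\<forall>r. 1 \<le> r \<and> r \<le> m \<longrightarrow> Q r \<le> P r"
    and "\<forall>c. card {r. (r, c) \<in> skew_cells m P Q} \<le> n"
  shows
    "(\<forall>x \<in> skew_tabs m n P Q. \<exists>y \<in> skew_tabs (m + n) (m + n) (ext_P m P) zero_Q.
        \<forall>k \<in> {0 .. int (m + n)}. \<forall>l \<in> Cset (m + n) k.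
          garr (m + n) (ext_P m P) zero_Q y k l = phi_arr m (garr m P Q x) k l)
     \<and> inj_on (phi m n P Q) (skew_tabs m n P Q)
     \<and> (\<forall>S \<in> skew_tabs m n P Q. \<forall>T \<in> skew_tabs m n P Q. \<forall>i.
          tab_edge m n P Q S i T \<longleftrightarrow>
          tab_edge (m + n) (m + n) (ext_P m P) zero_Q (phi m n P Q S) (i + m) (phi m n P Q T))
     \<and> phi m n P Q ` skew_tabs m n P Q =
         component (tab_edge (m + n) (m + n) (ext_P m P) zero_Q) {m + 1 .. m + n - 1}
           (phi m n P Q (tab_max m n P Q))
     \<and> (\<forall>x \<in> skew_tabs m n P Q. \<forall>i \<in> {1 .. n - 1}.
          weight (tab_edge (m + n) (m + n) (ext_P m P) zero_Q) (i + m) (phi m n P Q x)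
          = weight (tab_edge m n P Q) i x)
     \<and> (\<forall>S T i. tab_edge m n P Q S i T \<longrightarrow>
          Xcoef (m + n) (ext_P m P) zero_Q (phi m n P Q T) (phi m n P Q S) (i + m) = Xcoef m P Q T S i
          \<and> Ycoef (m + n) (ext_P m P) zero_Q (phi m n P Q S) (phi m n P Q T) (i + m) = Ycoef m P Q S T i)"
proof -
  interpret skew_embedding m n P Q by unfold_locales (fact assms(3-6))+
  have phi: "\<And>x. x \<in> L \<Longrightarrow> phi m n P Q x = phi_tab x" by (rule phi_eq_phi_tab)
  have weights: "weight EK (i + m) (phi_tab x) = weight EL i x" if "x \<in> L" "i \<in> {1 .. n - 1}" for x i
    using colour_embedding.weight_image[OF colour_embedding_phi_tab] that by simp
  have coefficients: "Xcoef (m + n) (ext_P m P) zero_Q (phi m n P Q T) (phi m n P Q S) (i + m) = Xcoef m P Q T S i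
      \<and> Ycoef (m + n) (ext_P m P) zero_Q (phi m n P Q S) (phi m n P Q T) (i + m) = Ycoef m P Q S T i"
    if "EL S i T" for S T i
    using coefficients_phi_tab[OF that] tab_edge_in_tabs[OF that] phi by simp
  have "phi m n P Q ` L = phi_tab ` L" by (rule image_cong[OF refl phi])
  then have component: "phi m n P Q ` L = component EK J (phi m n P Q (tab_max m n P Q))"
    using image_phi_tab_eq_component tab_max_eq_max_tab phi[OF max_tab_in_L] by simp
  show ?thesis
    using phi_tab_in_K garr_phi_tab inj_on_cong[of L "phi m n P Q" phi_tab] inj_on_phi_tab
      tab_edge_iff_phi_tab phi component weights coefficients
    by (simp add: Ball_def) blast
qed

end
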